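(* Let $X$ be a compact Riemann surface of genus $g\geq 2$ and $G\subseteq\mathrm{Aut}(X)$ a subgroup having a quotient isomorphic to $C_4$. Then $|G|\leq 10(g-1)$, except in the following cases: $G$ is covered by $\Gamma(0;3,4,4)$ and $|G|=12(g-1)$; $G$ is covered by $\Gamma(0;2,4,8)$ and $|G|=16(g-1)$; $G$ is covered by $\Gamma(0;2,4,12)$ and $|G|=12(g-1)$; $G$ is covered by $\Gamma(0;2,4,16)$ and $|G|=\frac{32}{3}(g-1)$.
   Context: $\mathrm{Aut}(X)$ denotes the group of conformal automorphisms of $X$; $C_n$ is the cyclic group of order $n$. For $G\subseteq \mathrm{Aut}(X)$ there is a Fuchsian group $\Gamma=\Gamma(h;m_1,\dots,m_r)$ acting on the upper half plane $\mathcal U$ and a torsion-free normal subgroup $K\subseteq\Gamma$ such that $\mathcal U/K\cong X$, $\Gamma/K\cong G$ (compatibly with the actions) and $\mathcal U/\Gamma\cong X/G$; one says $G$ is covered by $\Gamma$. Here $h$ is the genus of $X/G$ and the integers $m_i\ge 2$ (periods) are the orders of the branching; one has $|G|=\frac{2(g-1)}{2h-2+\sum_{i=1}^r(1-1/m_i)}$. For $h=0$, $\Gamma(0;m_1,\dots,m_r)\cong\langle x_1,\dots,x_r\mid x_1^{m_1}=\dots=x_r^{m_r}=1,\ x_1x_2\cdots x_r=1\rangle$. *)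

theory Defs
  imports "HOL-Algebra.Algebra" "HOL-Library.Multiset"
begin

definition list_prod :: "('a, 'b) monoid_scheme \<Rightarrow> 'a list \<Rightarrow> 'a" where
  "list_prod G xs = foldr (\<lambda>x y. x \<otimes>\<^bsub>G\<^esub> y) xs \<one>\<^bsub>G\<^esub>"

definition commutator :: "('a, 'b) monoid_scheme \<Rightarrow> 'a \<Rightarrow> 'a \<Rightarrow> 'a" where
  "commutator G a b = a \<otimes>\<^bsub>G\<^esub> b \<otimes>\<^bsub>G\<^esub> inv\<^bsub>G\<^esub> a \<otimes>\<^bsub>G\<^esub> inv\<^bsub>G\<^esub> b"

(* A generating vector of signature (h; m_1,...,m_r) for G, i.e. the images
   a_i, b_i, x_j of the canonical generators of
   Gamma(h; m_1..m_r) = <a_1,b_1,..,a_h,b_h,x_1..x_r | x_j^{m_j}, prod[a_i,b_i] x_1..x_r = 1>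
   under a surface-kernel epimorphism Gamma -> G (kernel torsion free
   <=> ord(x_j) = m_j exactly). *)
definition gen_vector ::
  "('a, 'b) monoid_scheme \<Rightarrow> nat \<Rightarrow> nat list \<Rightarrow> (nat \<Rightarrow> 'a) \<Rightarrow> (nat \<Rightarrow> 'a) \<Rightarrow> (nat \<Rightarrow> 'a) \<Rightarrow> bool" where
  "gen_vector G h ms a b x \<longleftrightarrow>
     (\<forall>i<h. a i \<in> carrier G \<and> b i \<in> carrier G) \<and>
     (\<forall>j<length ms. x j \<in> carrier G \<and> group.ord G (x j) = ms ! j) \<and>
     generate G ({a i | i. i < h} \<union> {b i | i. i < h} \<union> {x j | j. j < length ms}) = carrier G \<and>
     list_prod G (map (\<lambda>i. commutator G (a i) (b i)) [0..<h] @ map x [0..<length ms]) = \<one>\<^bsub>G\<^esub>"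

definition covered_by :: "('a, 'b) monoid_scheme \<Rightarrow> nat \<Rightarrow> nat list \<Rightarrow> bool" where
  "covered_by G h ms \<longleftrightarrow> (\<forall>m \<in> set ms. m \<ge> 2) \<and> (\<exists>a b x. gen_vector G h ms a b x)"

definition rh_genus :: "nat \<Rightarrow> nat \<Rightarrow> nat list \<Rightarrow> nat \<Rightarrow> bool" where
  "rh_genus n h ms g \<longleftrightarrow>
     real n * (2 * real h - 2 + (\<Sum>m\<leftarrow>ms. 1 - 1 / real m)) = 2 * (real g - 1)"

end

theory Submission
  imports Defs
begin

(* By Riemann-Hurwitz |G| = 2(g - 1) / A with A = 2h - 2 + sum (1 - 1/m_i), so it suffices
   to show A >= 1/5 apart from four signatures. For h >= 1 a positive A is at least 1/2.
   For h = 0 the images of x_1, ..., x_r in C_4 generate C_4 and add up to 0, so a positive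
   even number of them are odd; an x_j with odd image has order divisible by 4. With two
   periods divisible by 4, r <= 2 forces A <= 0, r >= 4 gives A >= 1/4, and for r = 3 a finite
   case analysis of 1 - 1/p - 1/q - 1/s leaves exactly the exceptional triangle signatures. *)

(* The hyperbolic area of Gamma(h; ms) divided by 2 pi. *)
definition signature_area :: "nat \<Rightarrow> nat list \<Rightarrow> real" where
  "signature_area h ms = 2 * real h - 2 + (\<Sum>m\<leftarrow>ms. 1 - 1 / real m)"

lemma rh_genus_iff_signature_area:
  "rh_genus n h ms g \<longleftrightarrow> real n * signature_area h ms = 2 * (real g - 1)"
  by (simp add: rh_genus_def signature_area_def)

lemma signature_area_mset:
  "signature_area h ms = 2 * real h - 2 + (\<Sum>m\<in>#mset ms. 1 - 1 / real m)"
  unfolding signature_area_def by (metis mset_map sum_mset_sum_list)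

lemma period_sum_ge_half_length:
  assumes "\<forall>m\<in>set ms. m \<ge> 2"
  shows "real (length ms) / 2 \<le> (\<Sum>m\<leftarrow>ms. 1 - 1 / real m)"
proof -
  have "real (length ms) / 2 = (\<Sum>m\<leftarrow>ms. 1 / 2)"
    by (simp add: sum_list_triv)
  also have "\<dots> \<le> (\<Sum>m\<leftarrow>ms. 1 - 1 / real m)"
    using assms by (intro sum_list_mono) (auto simp: field_simps)
  finally show ?thesis .
qed

lemma period_sum_le_length: "(\<Sum>m\<leftarrow>ms. 1 - 1 / real m) \<le> real (length ms)"
proof -
  have "(\<Sum>m\<leftarrow>ms. 1 - 1 / real m) \<le> (\<Sum>m\<leftarrow>ms. 1)"
    by (intro sum_list_mono) simp
  then show ?thesis
    by (simp add: sum_list_triv)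
qed

lemma signature_area_ge_half_if_genus_pos:
  assumes "h \<ge> 1" and "\<forall>m\<in>set ms. m \<ge> 2" and "0 < signature_area h ms"
  shows "1 / 2 \<le> signature_area h ms"
proof (cases "h = 1")
  case True
  with assms(3) have "ms \<noteq> []"
    by (auto simp: signature_area_def)
  then have "1 \<le> real (length ms)"
    by (simp add: Suc_le_eq)
  with True period_sum_ge_half_length[OF assms(2)] show ?thesis
    by (simp add: signature_area_def)
next
  case False
  with assms(1) period_sum_ge_half_length[OF assms(2)] show ?thesis
    by (simp add: signature_area_def)
qed

lemma multiple_of_4_cases:
  fixes k :: nat
  assumes "4 dvd k" and "0 < k"
  shows "k \<in> {4, 8, 12, 16} \<or> 20 \<le> k"
  using assms by (auto elim!: dvdE)

lemma half_minus_two_inverses_cases: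
  fixes q s :: nat
  assumes "4 dvd q" and "4 dvd s" and "0 < q" and "q \<le> s" and "0 < 1 / 2 - 1 / q - 1 / s"
  shows "1 / 5 \<le> 1 / 2 - 1 / q - 1 / s \<or> (q, s) \<in> {(4, 8), (4, 12), (4, 16)}"
proof (cases "q = 4")
  case True
  from multiple_of_4_cases[OF assms(2)] assms(3,4) consider "s \<in> {4, 8, 12, 16}" | "20 \<le> s"
    by auto
  then show ?thesis
  proof cases
    case 1
    with True assms(5) show ?thesis
      by auto
  next
    case 2
    then have "1 / real s \<le> 1 / 20"
      using inverse_of_nat_le[of 20 s] by simp
    with True show ?thesis
      by simp
  qed
next
  case False
  with multiple_of_4_cases[OF assms(1,3)] assms(4) have "8 \<le> q" "8 \<le> s"
    by auto
  then have "1 / real q \<le> 1 / 8" "1 / real s \<le> 1 / 8"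
    using inverse_of_nat_le[of 8] by fastforce+
  then show ?thesis
    by linarith
qed

lemma triangle_area_cases_ordered:
  fixes p q s :: nat
  assumes "p \<ge> 2" and "4 dvd q" and "4 dvd s" and "0 < q" and "q \<le> s"
    and "0 < 1 - 1 / p - 1 / q - 1 / s"
  shows "1 / 5 \<le> 1 - 1 / p - 1 / q - 1 / s
    \<or> (p, q, s) \<in> {(3, 4, 4), (2, 4, 8), (2, 4, 12), (2, 4, 16)}"
proof -
  have "4 \<le> q" "4 \<le> s"
    using multiple_of_4_cases assms(2-5) by fastforce+
  then have q_s: "1 / real q \<le> 1 / 4" "1 / real s \<le> 1 / 4"
    using inverse_of_nat_le[of 4] by fastforce+
  consider "p \<ge> 4" | "p = 3" | "p = 2"
    using assms(1) by linarith
  then show ?thesis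
  proof cases
    case 1
    then have "1 / real p \<le> 1 / 4"
      using inverse_of_nat_le[of 4 p] by simp
    with q_s show ?thesis
      by linarith
  next
    case 2
    show ?thesis
    proof (cases "s = 4")
      case True
      with 2 assms(5) \<open>4 \<le> q\<close> show ?thesis
        by simp
    next
      case False
      with multiple_of_4_cases[OF assms(3)] assms(4,5) have "1 / real s \<le> 1 / 8"
        using inverse_of_nat_le[of 8 s] by auto
      with 2 q_s(1) show ?thesis
        by simp
    qed
  next
    case 3
    with half_minus_two_inverses_cases[OF assms(2-5)] assms(6) show ?thesis
      by auto
  qed
qed

lemma triangle_signature_area_cases:
  fixes p q s :: nat
  assumes "p \<ge> 2" and "4 dvd q" and "4 dvd s" and "0 < q" and "0 < s"
    and "0 < signature_area 0 [p, q, s]"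
  shows "1 / 5 \<le> signature_area 0 [p, q, s]
    \<or> {#p, q, s#} \<in> {{#3, 4, 4#}, {#2, 4, 8#}, {#2, 4, 12#}, {#2, 4, 16#}}"
proof -
  have area: "signature_area 0 [p, q, s] = 1 - 1 / p - 1 / q - 1 / s"
    by (simp add: signature_area_def)
  show ?thesis
  proof (cases "q \<le> s")
    case True
    with triangle_area_cases_ordered[of p q s] assms area show ?thesis
      by auto
  next
    case False
    with triangle_area_cases_ordered[of p s q] assms area show ?thesis
      by (auto simp: add_mset_commute)
  qed
qed

lemma length_3_obtain_two_satisfying:
  assumes "length xs = 3" and "2 \<le> length (filter P xs)"
  obtains p q s where "mset xs = {#p, q, s#}" and "P q" and "P s"
proof -
  obtain a b c where "xs = [a, b, c]"
    using assms(1) by (auto simp: numeral_3_eq_3 length_Suc_conv)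
  with assms(2) that show ?thesis
    by (cases "P a"; cases "P b"; cases "P c") (fastforce simp: add_mset_commute)+
qed

lemma signature_area_genus0_ge_quarter:
  assumes periods: "\<forall>k\<in>set ms. k \<ge> 2" and "4 \<le> length ms" and "m \<in> set ms" and "4 \<le> m"
  shows "1 / 4 \<le> signature_area 0 ms"
proof -
  have "3 / 4 \<le> 1 - 1 / real m"
    using assms(4) by (simp add: field_simps)
  moreover have "3 / 2 \<le> (\<Sum>k\<leftarrow>remove1 m ms. 1 - 1 / real k)"
  proof -
    have "\<forall>k\<in>set (remove1 m ms). k \<ge> 2"
      using periods set_remove1_subset[of m ms] by blast
    moreover have "3 \<le> length (remove1 m ms)"
      using assms(2,3) by (simp add: length_remove1)
    ultimately show ?thesis
      using period_sum_ge_half_length[of "remove1 m ms"] by simp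
  qed
  ultimately have "9 / 4 \<le> (\<Sum>k\<leftarrow>ms. 1 - 1 / real k)"
    using sum_list_map_remove1[OF assms(3), of "\<lambda>k. 1 - 1 / real k"] by linarith
  then show ?thesis
    by (simp add: signature_area_def)
qed

lemma signature_area_genus0_cases:
  assumes periods: "\<forall>m\<in>set ms. m \<ge> 2"
    and multiples_of_4: "2 \<le> length (filter ((dvd) 4) ms)"
    and pos: "0 < signature_area 0 ms"
  shows "1 / 5 \<le> signature_area 0 ms
    \<or> mset ms \<in> {{#3, 4, 4#}, {#2, 4, 8#}, {#2, 4, 12#}, {#2, 4, 16#}}"
proof -
  consider "length ms \<le> 2" | "length ms = 3" | "length ms \<ge> 4"
    by linarith
  then show ?thesis
  proof cases
    case 1
    with period_sum_le_length[of ms] pos show ?thesis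
      by (simp add: signature_area_def)
  next
    case 2
    from 2 multiples_of_4 obtain p q s where ms: "mset ms = {#p, q, s#}" "4 dvd q" "4 dvd s"
      by (rule length_3_obtain_two_satisfying)
    have "\<forall>m\<in>#mset ms. m \<ge> 2"
      using periods by simp
    with ms have "p \<ge> 2" "0 < q" "0 < s"
      by auto
    moreover have "signature_area 0 ms = signature_area 0 [p, q, s]"
      using ms by (simp add: signature_area_mset)
    ultimately show ?thesis
      using triangle_signature_area_cases[of p q s] ms pos by auto
  next
    case 3
    from multiples_of_4 obtain m where m: "m \<in> set ms" "4 dvd m"
      by (metis filter_False le_zero_eq length_0_conv zero_neq_numeral)
    with periods have "m \<ge> 4"
      by (auto elim!: dvdE)
    with periods 3 m(1) have "1 / 4 \<le> signature_area 0 ms"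
      by (rule signature_area_genus0_ge_quarter)
    then have "1 / 5 \<le> signature_area 0 ms"
      by simp
    then show ?thesis ..
  qed
qed

lemma list_prod_Nil [simp]: "list_prod G [] = \<one>\<^bsub>G\<^esub>"
  by (simp add: list_prod_def)

lemma list_prod_Cons [simp]: "list_prod G (x # xs) = x \<otimes>\<^bsub>G\<^esub> list_prod G xs"
  by (simp add: list_prod_def)

lemma list_prod_closed:
  assumes "monoid G" and "set xs \<subseteq> carrier G"
  shows "list_prod G xs \<in> carrier G"
  using assms(2)
  by (induction xs) (simp_all add: monoid.m_closed[OF assms(1)] monoid.one_closed[OF assms(1)])

lemma hom_list_prod:
  assumes "group G" and "group H" and "\<phi> \<in> hom G H" and "set xs \<subseteq> carrier G"
  shows "\<phi> (list_prod G xs) = list_prod H (map \<phi> xs)"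
  using assms(4)
proof (induction xs)
  case Nil
  then show ?case
    using hom_one[OF assms(3,1,2)] by simp
next
  case (Cons y xs)
  then show ?case
    using hom_mult[OF assms(3)] list_prod_closed[OF group.is_monoid[OF assms(1)]] by simp
qed

lemma list_prod_integer_mod_group:
  "list_prod (integer_mod_group n) ks = sum_list ks mod int n"
  by (induction ks) (simp_all add: mod_add_right_eq)

lemma even_sum_list_iff:
  fixes xs :: "'a::semiring_parity list"
  shows "even (sum_list xs) \<longleftrightarrow> even (length (filter odd xs))"
  by (induction xs) auto

lemma even_length_filter_odd_image:
  assumes "group G" and "\<phi> \<in> hom G (integer_mod_group n)" and "even n"
    and "set xs \<subseteq> carrier G" and "list_prod G xs = \<one>\<^bsub>G\<^esub>"
  shows "even (length (filter (\<lambda>y. odd (\<phi> y)) xs))"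
proof -
  have "sum_list (map \<phi> xs) mod int n = 0"
    using hom_list_prod[OF assms(1) _ assms(2,4)] hom_one[OF assms(2,1)] assms(5)
    by (simp add: list_prod_integer_mod_group)
  then have "even (sum_list (map \<phi> xs))"
    using dvd_mod_iff[of 2 "int n"] assms(3) by fastforce
  then show ?thesis
    by (simp add: even_sum_list_iff length_filter_map comp_def)
qed

lemma subgroup_even_integer_mod_group:
  assumes "even n"
  shows "subgroup {k \<in> carrier (integer_mod_group n). even k} (integer_mod_group n)"
    (is "subgroup ?E ?Zn")
proof (rule group.subgroupI[OF group_integer_mod_group])
  fix k assume "k \<in> ?E"
  with assms show "inv\<^bsub>?Zn\<^esub> k \<in> ?E"
    using group.inv_closed[OF group_integer_mod_group] by (simp add: dvd_mod_iff)
next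
  fix k l assume "k \<in> ?E" and "l \<in> ?E"
  with assms show "k \<otimes>\<^bsub>?Zn\<^esub> l \<in> ?E"
    using monoid.m_closed[OF group.is_monoid[OF group_integer_mod_group]] by (simp add: dvd_mod_iff)
qed (auto intro!: exI[of _ 0])

lemma generating_set_has_odd_image:
  assumes "group G" and "\<phi> \<in> epi G (integer_mod_group n)" and "even n"
    and "S \<subseteq> carrier G" and "generate G S = carrier G"
  shows "\<exists>y\<in>S. odd (\<phi> y)"
proof (rule ccontr)
  let ?Zn = "integer_mod_group n"
  let ?E = "{k \<in> carrier ?Zn. even k}"
  assume no_odd: "\<not> ?thesis"
  interpret group_hom G ?Zn \<phi>
    using assms(1,2) by (simp add: group_hom_def group_hom_axioms_def epi_def)
  have "\<phi> ` carrier G = generate ?Zn (\<phi> ` S)"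
    using generate_img[OF assms(4)] assms(5) by simp
  also have "\<dots> \<subseteq> ?E"
    using no_odd assms(4) subgroup_even_integer_mod_group[OF assms(3)]
    by (intro H.generate_subgroup_incl) auto
  finally have "carrier ?Zn \<subseteq> ?E"
    using assms(2) by (simp add: epi_def)
  moreover have "1 \<in> carrier ?Zn"
    using assms(3) by auto
  ultimately have "even (1 :: int)"
    by blast
  then show False
    by simp
qed

lemma dvd_ord_if_coprime_image:
  assumes "group G" and "\<phi> \<in> hom G (integer_mod_group n)" and "y \<in> carrier G"
    and "coprime (\<phi> y) (int n)"
  shows "n dvd group.ord G y"
proof -
  have "(int (group.ord G y) * \<phi> y) mod int n = \<phi> (y [^]\<^bsub>G\<^esub> group.ord G y)"
    using hom_nat_pow[OF assms(2,3,1)] by simp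
  also have "\<dots> = 0"
    using group.pow_ord_eq_1[OF assms(1,3)] hom_one[OF assms(2,1)] by simp
  finally have "int n dvd int (group.ord G y) * \<phi> y"
    by (simp add: mod_eq_0_iff_dvd)
  with assms(4) have "int n dvd int (group.ord G y)"
    by (simp add: coprime_dvd_mult_left_iff coprime_commute)
  then show ?thesis
    by simp
qed

lemma gen_vector_genus0_two_periods_div4:
  assumes "group G" and "\<phi> \<in> epi G (integer_mod_group 4)" and "gen_vector G 0 ms a b x"
  shows "2 \<le> length (filter ((dvd) 4) ms)"
proof -
  let ?xs = "map x [0..<length ms]"
  let ?odd_image = "\<lambda>y. odd (\<phi> y)"
  have hom: "\<phi> \<in> hom G (integer_mod_group 4)"
    using assms(2) by (simp add: epi_def)
  have "set ?xs = {x j | j. j < length ms}"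
    by auto
  with assms(3) have xs: "set ?xs \<subseteq> carrier G" "generate G (set ?xs) = carrier G"
    "list_prod G ?xs = \<one>\<^bsub>G\<^esub>"
    by (auto simp: gen_vector_def)
  have "\<exists>y\<in>set ?xs. ?odd_image y"
    using generating_set_has_odd_image[OF assms(1,2) _ xs(1,2)] by simp
  then have "0 < length (filter ?odd_image ?xs)"
    by (auto simp: filter_empty_conv)
  moreover have "even (length (filter ?odd_image ?xs))"
    using even_length_filter_odd_image[OF assms(1) hom _ xs(1,3)] by simp
  moreover have "2 \<le> k" if "0 < k" and "even k" for k :: nat
    using that by presburger
  ultimately have "2 \<le> length (filter ?odd_image ?xs)"
    by blast
  also have "\<dots> \<le> length (filter ((dvd) 4) ms)"
  proof -
    have "4 dvd ms ! j" if "j < length ms" and "odd (\<phi> (x j))" for j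
    proof -
      have "coprime (\<phi> (x j)) (int 4)"
        using that(2) coprime_power_right_iff[of "\<phi> (x j)" 2 2] by simp
      moreover have "x j \<in> carrier G" and "group.ord G (x j) = ms ! j"
        using assms(3) that(1) by (simp_all add: gen_vector_def)
      ultimately show ?thesis
        using dvd_ord_if_coprime_image[OF assms(1) hom] by fastforce
    qed
    then show ?thesis
      unfolding length_filter_conv_card by (intro card_mono) auto
  qed
  finally show ?thesis .
qed

lemma signature_area_cases_if_epi_C4:
  assumes "group G" and "covered_by G h ms" and "\<exists>\<phi>. \<phi> \<in> epi G (integer_mod_group 4)"
    and "0 < signature_area h ms"
  shows "1 / 5 \<le> signature_area h ms
    \<or> h = 0 \<and> mset ms \<in> {{#3, 4, 4#}, {#2, 4, 8#}, {#2, 4, 12#}, {#2, 4, 16#}}"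
proof -
  obtain a b x where gv: "gen_vector G h ms a b x" and periods: "\<forall>m\<in>set ms. m \<ge> 2"
    using assms(2) by (auto simp: covered_by_def)
  show ?thesis
  proof (cases "h = 0")
    case True
    with gv assms(1,3) have "2 \<le> length (filter ((dvd) 4) ms)"
      using gen_vector_genus0_two_periods_div4 by blast
    with True periods assms(4) show ?thesis
      using signature_area_genus0_cases by simp
  next
    case False
    with periods assms(4) show ?thesis
      using signature_area_ge_half_if_genus_pos[of h ms] by simp
  qed
qed

theorem lemma3p4:
  fixes G :: "('a, 'b) monoid_scheme" and h g :: nat and ms :: "nat list"
  assumes "group G" and "finite (carrier G)"
    and "covered_by G h ms"
    and "g \<ge> 2"
    and "rh_genus (card (carrier G)) h ms g"
    and "\<exists>\<phi>. \<phi> \<in> epi G (integer_mod_group 4)"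
  shows "real (card (carrier G)) \<le> 10 * (real g - 1)
       \<or> (h = 0 \<and> mset ms = {#3, 4, 4#} \<and> real (card (carrier G)) = 12 * (real g - 1))
       \<or> (h = 0 \<and> mset ms = {#2, 4, 8#} \<and> real (card (carrier G)) = 16 * (real g - 1))
       \<or> (h = 0 \<and> mset ms = {#2, 4, 12#} \<and> real (card (carrier G)) = 12 * (real g - 1))
       \<or> (h = 0 \<and> mset ms = {#2, 4, 16#} \<and> real (card (carrier G)) = 32 / 3 * (real g - 1))"
proof -
  define n where "n = real (card (carrier G))"
  define A where "A = signature_area h ms"
  have rh: "n * A = 2 * (real g - 1)"
    using assms(5) by (simp add: rh_genus_iff_signature_area n_def A_def)
  have "0 < n"
    using assms(1,2) group.is_monoid monoid.one_closed card_gt_0_iff by (fastforce simp: n_def)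
  moreover have "0 < n * A"
    using rh assms(4) by simp
  ultimately have "0 < A"
    by (simp add: zero_less_mult_iff)
  with assms(1,3,6) show ?thesis
  proof (elim signature_area_cases_if_epi_C4[of G h ms, folded A_def, THEN disjE])
    assume "1 / 5 \<le> A"
    with \<open>0 < n\<close> have "n / 5 \<le> n * A"
      using mult_left_mono[of "1 / 5" A n] by simp
    with rh show ?thesis
      by (simp add: n_def)
  next
    assume "h = 0 \<and> mset ms \<in> {{#3, 4, 4#}, {#2, 4, 8#}, {#2, 4, 12#}, {#2, 4, 16#}}"
    then show ?thesis
      using rh by (elim conjE insertE emptyE) (simp_all add: A_def n_def signature_area_mset)
  qed
qed

end
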